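(* Let $n\ge1$ and let $(\xi_i,\mathcal{F}_i)_{i=0,\dots,n}$ be a sequence of real-valued martingale differences on $(\Omega,\mathcal{F},\mathbf{P})$ with $\xi_0=0$, $\{\emptyset,\Omega\}=\mathcal{F}_0\subseteq\cdots\subseteq\mathcal{F}_n\subseteq\mathcal{F}$ and $\mathbf{E}[\xi_i\mid\mathcal{F}_{i-1}]=0$. Let $S_k=\sum_{i=1}^k\xi_i$ and $\langle S\rangle_k=\sum_{i=1}^k\mathbf{E}[\xi_i^2\mid\mathcal{F}_{i-1}]$. Let $p\ge2$ and $\delta>0$, and assume $\mathbf{E}[|\xi_i|^{p+\delta}]<\infty$ for all $i\in[1,n]$. Then for all $x,v>0$, $$\mathbf{P}\big(S_k\ge x\text{ and }\langle S\rangle_k\le v^2\text{ for some }k\in[1,n]\big)\le\exp\Bigg\{-\frac{x^2}{2\big(v^2+\frac13x^{(2p+\delta)/(p+\delta)}\big)}\Bigg\}+\frac{1}{x^p}\sum_{i=1}^n\mathbf{E}\Big[|\xi_i|^{p+\delta}\mathbf{1}_{\{\xi_i>x^{p/(p+\delta)}\}}\Big].$$ *)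

theory Defs
  imports "HOL-Probability.Probability"
begin

definition mart_sum :: "(nat \<Rightarrow> 'a \<Rightarrow> real) \<Rightarrow> nat \<Rightarrow> 'a \<Rightarrow> real" where
  "mart_sum \<xi> k \<omega> = (\<Sum>i=1..k. \<xi> i \<omega>)"

definition cond_var_sum :: "'a measure \<Rightarrow> (nat \<Rightarrow> 'a measure) \<Rightarrow> (nat \<Rightarrow> 'a \<Rightarrow> real) \<Rightarrow> nat \<Rightarrow> 'a \<Rightarrow> real" where
  "cond_var_sum M F \<xi> k \<omega> = (\<Sum>i=1..k. real_cond_exp M (F (i - 1)) (\<lambda>w. (\<xi> i w)\<^sup>2) \<omega>)"

end

theory Submission
  imports Defs
begin

text \<open>
  Truncate the increments at \<open>y = x powr (p / (p + \<delta>))\<close>. If no \<open>\<xi>\<^sub>i\<close> exceeds \<open>y\<close>, then \<open>S\<^sub>k\<close>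
  coincides with the sum of the truncated increments \<open>min \<xi>\<^sub>i y\<close>; the event that some \<open>\<xi>\<^sub>i > y\<close>
  is handled by a union bound and Markov's inequality, using \<open>y powr (p + \<delta>) = x powr p\<close>.
  For the truncated increments, Bernstein's inequality \<open>exp s \<le> 1 + s + s\<^sup>2 / (2 (1 - a/3))\<close>
  for \<open>s \<le> a < 3\<close> makes
  \<open>Z\<^sub>k = exp (\<lambda> (min \<xi>\<^sub>1 y + \<dots> + min \<xi>\<^sub>k y) - \<lambda>\<^sup>2 / (2 (1 - \<lambda> y / 3)) \<langle>S\<rangle>\<^sub>k)\<close>
  a nonnegative supermartingale, so
  Ville's maximal inequality bounds the probability that it ever reaches
  \<open>exp (\<lambda> x - \<lambda>\<^sup>2 / (2 (1 - \<lambda> y / 3)) v\<^sup>2)\<close>. The choice \<open>\<lambda> = x / (v\<^sup>2 + x y / 3)\<close> gives the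
  exponential term.
\<close>

lemma two_mult_three_pow_le_fact: "2 * 3 ^ n \<le> (fact (n + 2) :: real)"
proof (induction n)
  case (Suc n)
  have "2 * 3 ^ Suc n = 3 * (2 * 3 ^ n :: real)" by simp
  also have "\<dots> \<le> real (n + 3) * fact (n + 2)"
    using Suc.IH by (intro mult_mono) auto
  also have "\<dots> = fact (Suc n + 2)" by (simp add: algebra_simps)
  finally show ?case .
qed simp

lemma exp_le_Bernstein_nonneg:
  fixes s :: real
  assumes "0 \<le> s" "s < 3"
  shows "exp s \<le> 1 + s + s\<^sup>2 / (2 * (1 - s / 3))"
proof -
  have tail: "summable (\<lambda>n. inverse (fact (n + 2)) * s ^ (n + 2))"
    using summable_ignore_initial_segment[OF summable_exp_generic[of s], of 2] by simp
  have geom: "summable (\<lambda>n. s\<^sup>2 / 2 * (s / 3) ^ n)"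
    using assms by (intro summable_mult summable_geometric) auto
  have term_le: "inverse (fact (n + 2)) * s ^ (n + 2) \<le> s\<^sup>2 / 2 * (s / 3) ^ n" for n
  proof -
    have "inverse (fact (n + 2)) * s ^ (n + 2) = s\<^sup>2 * s ^ n / fact (n + 2)"
      by (simp add: power_add divide_inverse ac_simps power2_eq_square)
    also have "\<dots> \<le> s\<^sup>2 * s ^ n / (2 * 3 ^ n)"
      using two_mult_three_pow_le_fact[of n] assms by (intro divide_left_mono) auto
    also have "\<dots> = s\<^sup>2 / 2 * (s / 3) ^ n" by (simp add: power_divide)
    finally show ?thesis .
  qed
  have "(\<Sum>n. inverse (fact (n + 2)) * s ^ (n + 2)) \<le> (\<Sum>n. s\<^sup>2 / 2 * (s / 3) ^ n)"
    by (rule suminf_le[OF term_le tail geom])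
  also have "\<dots> = s\<^sup>2 / (2 * (1 - s / 3))"
    using assms by (subst suminf_mult) (auto simp: suminf_geometric)
  finally show ?thesis using exp_first_two_terms[of s] by simp
qed

lemma exp_le_quadratic_nonpos:
  fixes s :: real
  assumes "s \<le> 0"
  shows "exp s \<le> 1 + s + s\<^sup>2 / 2"
proof -
  let ?f = "\<lambda>t. 1 + t + t\<^sup>2 / 2 - exp t"
  have "?f 0 \<le> ?f s"
  proof (rule DERIV_nonpos_imp_nonincreasing[OF assms])
    fix t assume "s \<le> t" "t \<le> 0"
    have "DERIV ?f t :> 1 + t - exp t"
      by (auto intro!: derivative_eq_intros)
    moreover have "1 + t - exp t \<le> 0"
      using exp_ge_add_one_self[of t] by simp
    ultimately show "\<exists>d. DERIV ?f t :> d \<and> d \<le> 0" by blast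
  qed
  then show ?thesis by simp
qed

lemma exp_le_Bernstein:
  fixes s a :: real
  assumes "s \<le> a" "0 \<le> a" "a < 3"
  shows "exp s \<le> 1 + s + s\<^sup>2 / (2 * (1 - a / 3))"
proof (cases "s \<le> 0")
  case True
  have "s\<^sup>2 / 2 \<le> s\<^sup>2 / (2 * (1 - a / 3))"
    using assms by (intro divide_left_mono) auto
  then show ?thesis using exp_le_quadratic_nonpos[OF True] by linarith
next
  case False
  have "s\<^sup>2 / (2 * (1 - s / 3)) \<le> s\<^sup>2 / (2 * (1 - a / 3))"
    using assms False by (intro divide_left_mono) (auto intro!: mult_pos_pos)
  then show ?thesis using exp_le_Bernstein_nonneg[of s] assms False by simp
qed

lemma exp_mult_min_le_quadratic:
  fixes l t y :: real
  assumes "0 < l" "0 \<le> y" "l * y < 3"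
  shows "exp (l * min t y) \<le> 1 + l * t + l\<^sup>2 / (2 * (1 - l * y / 3)) * t\<^sup>2"
proof -
  have "exp (l * min t y) \<le> 1 + l * min t y + (l * min t y)\<^sup>2 / (2 * (1 - l * y / 3))"
    using assms by (intro exp_le_Bernstein) (auto simp: mult_left_mono)
  also have "\<dots> = 1 + l * min t y + l\<^sup>2 / (2 * (1 - l * y / 3)) * (min t y)\<^sup>2"
    by (simp add: power_mult_distrib)
  also have "\<dots> \<le> 1 + l * t + l\<^sup>2 / (2 * (1 - l * y / 3)) * t\<^sup>2"
  proof -
    have "\<bar>min t y\<bar> \<le> \<bar>t\<bar>" using assms by auto
    then have "(min t y)\<^sup>2 \<le> t\<^sup>2" by (simp add: abs_le_square_iff)
    then show ?thesis
      using assms by (intro add_mono mult_left_mono) auto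
  qed
  finally show ?thesis .
qed

lemma integrable_bounded_mult:
  fixes f g :: "'a \<Rightarrow> real"
  assumes "integrable M f" "g \<in> borel_measurable M" "AE \<omega> in M. \<bar>g \<omega>\<bar> \<le> C"
  shows "integrable M (\<lambda>\<omega>. g \<omega> * f \<omega>)"
proof (rule Bochner_Integration.integrable_bound[where f="\<lambda>\<omega>. C * f \<omega>"])
  show "AE \<omega> in M. norm (g \<omega> * f \<omega>) \<le> norm (C * f \<omega>)"
    using assms(3) by eventually_elim (auto simp: abs_mult intro: mult_right_mono)
qed (use assms borel_measurable_integrable in auto)

lemma integral_mult_quadratic_eq_cond_exp:
  fixes X W :: "'a \<Rightarrow> real"
  assumes G: "subalgebra M G" and "finite_measure M"
    and X: "integrable M X" and X2: "integrable M (\<lambda>\<omega>. (X \<omega>)\<^sup>2)"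
    and centered: "AE \<omega> in M. real_cond_exp M G X \<omega> = 0"
    and WG [measurable]: "W \<in> borel_measurable G" and W_le: "AE \<omega> in M. \<bar>W \<omega>\<bar> \<le> C"
  shows "(\<integral>\<omega>. W \<omega> * (1 + a * X \<omega> + b * (X \<omega>)\<^sup>2) \<partial>M)
    = (\<integral>\<omega>. W \<omega> * (1 + b * real_cond_exp M G (\<lambda>w. (X w)\<^sup>2) \<omega>) \<partial>M)"
proof -
  interpret finite_measure M by fact
  interpret finite_measure_subalgebra M G by unfold_locales (rule G)
  have WM [measurable]: "W \<in> borel_measurable M" by (rule measurable_from_subalg[OF G WG])
  note W_times = integrable_bounded_mult[OF _ WM W_le]
  have W: "integrable M W" using W_times[of "\<lambda>_. 1"] by simp
  have "(\<integral>\<omega>. W \<omega> * X \<omega> \<partial>M) = (\<integral>\<omega>. W \<omega> * real_cond_exp M G X \<omega> \<partial>M)"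
    using W_times[OF X] X by (intro real_cond_exp_intg(2)[symmetric]) auto
  also have "\<dots> = 0"
    using centered by (subst integral_cong_AE[where g="\<lambda>_. 0"]) auto
  finally have "(\<integral>\<omega>. W \<omega> * X \<omega> \<partial>M) = 0" .
  moreover have "(\<integral>\<omega>. W \<omega> * (X \<omega>)\<^sup>2 \<partial>M) = (\<integral>\<omega>. W \<omega> * real_cond_exp M G (\<lambda>w. (X w)\<^sup>2) \<omega> \<partial>M)"
    using W_times[OF X2] X2 by (intro real_cond_exp_intg(2)[symmetric]) auto
  moreover have "integrable M (\<lambda>\<omega>. W \<omega> * real_cond_exp M G (\<lambda>w. (X w)\<^sup>2) \<omega>)"
    using X2 by (intro W_times) auto
  ultimately show ?thesis
    using W W_times[OF X] W_times[OF X2] by (simp add: algebra_simps)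
qed

lemma Bernstein_supermartingale_step:
  fixes X Y :: "'a \<Rightarrow> real"
  assumes "prob_space M" and G: "subalgebra M G"
    and X: "integrable M X" and X2: "integrable M (\<lambda>\<omega>. (X \<omega>)\<^sup>2)"
    and centered: "AE \<omega> in M. real_cond_exp M G X \<omega> = 0"
    and YG [measurable]: "Y \<in> borel_measurable G" and Y_nonneg: "\<And>\<omega>. 0 \<le> Y \<omega>" and Y_le: "AE \<omega> in M. Y \<omega> \<le> C"
    and l: "0 < l" "0 \<le> y" "l * y < 3"
  shows "(\<integral>\<omega>. Y \<omega> * exp (l * min (X \<omega>) y
            - l\<^sup>2 / (2 * (1 - l * y / 3)) * real_cond_exp M G (\<lambda>w. (X w)\<^sup>2) \<omega>) \<partial>M)
         \<le> (\<integral>\<omega>. Y \<omega> \<partial>M)"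
proof -
  interpret prob_space M by fact
  interpret finite_measure_subalgebra M G by unfold_locales (rule G)
  define g where "g = l\<^sup>2 / (2 * (1 - l * y / 3))"
  define Q where "Q = real_cond_exp M G (\<lambda>w. (X w)\<^sup>2)"
  \<comment> \<open>The compensator \<open>exp (- g Q)\<close> is \<open>G\<close>-measurable, so it can be absorbed into the weight.\<close>
  define Y' where "Y' \<omega> = Y \<omega> * exp (- g * Q \<omega>)" for \<omega>
  have g: "0 \<le> g" unfolding g_def using l by auto
  have [measurable]: "X \<in> borel_measurable M" using X by auto
  have [measurable]: "Y \<in> borel_measurable M" by (rule measurable_from_subalg[OF G YG])
  have Y'G [measurable]: "Y' \<in> borel_measurable G" unfolding Y'_def Q_def by measurable
  have Y'M [measurable]: "Y' \<in> borel_measurable M" by (rule measurable_from_subalg[OF G Y'G])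
  have Y'_nonneg: "0 \<le> Y' \<omega>" for \<omega> unfolding Y'_def using Y_nonneg by auto
  have Y'_le: "AE \<omega> in M. \<bar>Y' \<omega>\<bar> \<le> C"
  proof -
    have "AE \<omega> in M. 0 \<le> Q \<omega>" unfolding Q_def by (intro real_cond_exp_pos) auto
    with Y_le show ?thesis
    proof eventually_elim
      case (elim \<omega>)
      then have "exp (- g * Q \<omega>) \<le> 1" using g by (simp add: mult_nonneg_nonneg)
      then have "Y' \<omega> \<le> Y \<omega>" unfolding Y'_def using Y_nonneg[of \<omega>] by (simp add: mult_left_le)
      then show ?case using elim Y'_nonneg[of \<omega>] by simp
    qed
  qed
  have "(\<integral>\<omega>. Y \<omega> * exp (l * min (X \<omega>) y - g * Q \<omega>) \<partial>M) = (\<integral>\<omega>. Y' \<omega> * exp (l * min (X \<omega>) y) \<partial>M)"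
    unfolding Y'_def by (simp add: exp_diff exp_minus field_simps)
  also have "\<dots> \<le> (\<integral>\<omega>. Y' \<omega> * (1 + l * X \<omega> + g * (X \<omega>)\<^sup>2) \<partial>M)"
  proof (rule integral_mono)
    show "integrable M (\<lambda>\<omega>. Y' \<omega> * exp (l * min (X \<omega>) y))"
    proof (rule integrable_const_bound[where B="C * exp (l * y)"])
      show "AE \<omega> in M. norm (Y' \<omega> * exp (l * min (X \<omega>) y)) \<le> C * exp (l * y)"
        using Y'_le
      proof eventually_elim
        case (elim \<omega>)
        have "exp (l * min (X \<omega>) y) \<le> exp (l * y)" using l by (simp add: mult_left_mono)
        then show ?case using elim Y'_nonneg[of \<omega>] by (simp add: abs_mult mult_mono)
      qed
    qed measurable
    show "integrable M (\<lambda>\<omega>. Y' \<omega> * (1 + l * X \<omega> + g * (X \<omega>)\<^sup>2))"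
      using X X2 by (intro integrable_bounded_mult[OF _ Y'M Y'_le]) auto
    show "Y' \<omega> * exp (l * min (X \<omega>) y) \<le> Y' \<omega> * (1 + l * X \<omega> + g * (X \<omega>)\<^sup>2)" for \<omega>
      unfolding g_def using exp_mult_min_le_quadratic[OF l] Y'_nonneg by (intro mult_left_mono)
  qed
  also have "\<dots> = (\<integral>\<omega>. Y' \<omega> * (1 + g * Q \<omega>) \<partial>M)"
    unfolding Q_def by (rule integral_mult_quadratic_eq_cond_exp[OF G finite_measure_axioms X X2 centered Y'G Y'_le])
  also have "\<dots> \<le> (\<integral>\<omega>. Y \<omega> \<partial>M)"
  proof (rule integral_mono)
    show "integrable M (\<lambda>\<omega>. Y' \<omega> * (1 + g * Q \<omega>))"
    proof (rule integrable_bounded_mult[OF _ Y'M Y'_le])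
      show "integrable M (\<lambda>\<omega>. 1 + g * Q \<omega>)"
        unfolding Q_def using real_cond_exp_int(1)[OF X2] by simp
    qed
    show "integrable M Y" using Y_le Y_nonneg by (intro integrable_const_bound[of _ C]) auto
    show "Y' \<omega> * (1 + g * Q \<omega>) \<le> Y \<omega>" for \<omega>
    proof -
      have "Y' \<omega> * (1 + g * Q \<omega>) \<le> Y' \<omega> * exp (g * Q \<omega>)"
        using Y'_nonneg by (intro mult_left_mono) auto
      also have "\<dots> = Y \<omega>" unfolding Y'_def by (simp add: exp_minus field_simps)
      finally show ?thesis .
    qed
  qed
  finally show ?thesis unfolding g_def Q_def .
qed

definition uncrossed :: "(nat \<Rightarrow> 'a \<Rightarrow> real) \<Rightarrow> real \<Rightarrow> nat \<Rightarrow> 'a \<Rightarrow> real" where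
  "uncrossed Z c k \<omega> = of_bool (\<forall>j\<in>{1..k}. Z j \<omega> < c)"

lemma uncrossed_0 [simp]: "uncrossed Z c 0 \<omega> = 1"
  by (simp add: uncrossed_def)

lemma uncrossed_range: "0 \<le> uncrossed Z c k \<omega>" "uncrossed Z c k \<omega> \<le> 1"
  by (simp_all add: uncrossed_def)

lemma borel_measurable_uncrossed:
  assumes "\<And>j. j \<in> {1..k} \<Longrightarrow> Z j \<in> borel_measurable N"
  shows "uncrossed Z c k \<in> borel_measurable N"
proof -
  have "Measurable.pred N (\<lambda>\<omega>. \<forall>j\<in>{1..k}. Z j \<omega> < c)"
  proof (rule pred_intros_finite(3))
    fix j assume "j \<in> {1..k}"
    then have [measurable]: "Z j \<in> borel_measurable N" by (rule assms)
    show "Measurable.pred N (\<lambda>\<omega>. Z j \<omega> < c)" by measurable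
  qed simp
  then show ?thesis unfolding uncrossed_def by measurable
qed

text \<open>\<open>c (1 - uncrossed Z c k) + Z\<^sub>k uncrossed Z c k\<close> is \<open>Z\<close> stopped when it first reaches
  level \<open>c\<close>, with the stopped value replaced by \<open>c\<close>.\<close>

lemma stopped_at_level_Suc_le:
  "c * (1 - uncrossed Z c (Suc k) \<omega>) + Z (Suc k) \<omega> * uncrossed Z c (Suc k) \<omega>
     \<le> c * (1 - uncrossed Z c k \<omega>) + Z (Suc k) \<omega> * uncrossed Z c k \<omega>"
  by (cases "Z (Suc k) \<omega> < c") (auto simp: uncrossed_def le_Suc_eq)

context
  fixes M :: "'a measure" and F :: "nat \<Rightarrow> 'a measure" and n :: nat
    and Z D :: "nat \<Rightarrow> 'a \<Rightarrow> real" and c :: real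
  assumes prob: "prob_space M"
    and Fsub: "\<And>k. k \<le> n \<Longrightarrow> subalgebra M (F k)"
    and Z_adapted: "\<And>j k. j \<le> k \<Longrightarrow> k \<le> n \<Longrightarrow> Z j \<in> borel_measurable (F k)"
    and Z_0: "\<And>\<omega>. Z 0 \<omega> = 1"
    and Z_nonneg: "\<And>k \<omega>. 0 \<le> Z k \<omega>"
    and Z_bounded: "\<And>k. k \<le> n \<Longrightarrow> \<exists>B. AE \<omega> in M. Z k \<omega> \<le> B"
    and Z_Suc: "\<And>k \<omega>. Z (Suc k) \<omega> = Z k \<omega> * D (Suc k) \<omega>"
    and supermartingale: "\<And>k Y C. k < n \<Longrightarrow> Y \<in> borel_measurable (F k) \<Longrightarrow> (\<And>\<omega>. 0 \<le> Y \<omega>)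
        \<Longrightarrow> AE \<omega> in M. Y \<omega> \<le> C \<Longrightarrow> (\<integral>\<omega>. Y \<omega> * D (Suc k) \<omega> \<partial>M) \<le> (\<integral>\<omega>. Y \<omega> \<partial>M)"
begin

private lemma uncrossed_adapted: "k \<le> n \<Longrightarrow> uncrossed Z c k \<in> borel_measurable (F k)"
  by (intro borel_measurable_uncrossed Z_adapted) auto

private lemma stopped_nonneg: "0 \<le> Z j \<omega> * uncrossed Z c k \<omega>"
  by (intro mult_nonneg_nonneg Z_nonneg uncrossed_range)

private lemma stopped_bounded:
  assumes "j \<le> n" obtains B where "AE \<omega> in M. Z j \<omega> * uncrossed Z c k \<omega> \<le> B"
proof -
  obtain B where "AE \<omega> in M. Z j \<omega> \<le> B" using Z_bounded[OF assms] by blast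
  then have "AE \<omega> in M. Z j \<omega> * uncrossed Z c k \<omega> \<le> B"
    by eventually_elim (metis mult_left_le order_trans uncrossed_range(2) Z_nonneg)
  then show ?thesis by (rule that)
qed

private lemma integrable_stopped:
  assumes "j \<le> n" "k \<le> n"
  shows "integrable M (\<lambda>\<omega>. c * (1 - uncrossed Z c k \<omega>))" "integrable M (\<lambda>\<omega>. Z j \<omega> * uncrossed Z c k \<omega>)"
proof -
  interpret prob_space M by (rule prob)
  have [measurable]: "uncrossed Z c k \<in> borel_measurable M" "Z j \<in> borel_measurable M"
    using measurable_from_subalg[OF Fsub uncrossed_adapted] measurable_from_subalg[OF Fsub Z_adapted] assms
    by auto
  show "integrable M (\<lambda>\<omega>. c * (1 - uncrossed Z c k \<omega>))"
  proof (rule integrable_const_bound[of _ "\<bar>c\<bar>"])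
    have "\<bar>1 - uncrossed Z c k \<omega>\<bar> \<le> 1" for \<omega> using uncrossed_range[of Z c k \<omega>] by auto
    then show "AE \<omega> in M. norm (c * (1 - uncrossed Z c k \<omega>)) \<le> \<bar>c\<bar>"
      by (simp add: abs_mult mult_left_le)
  qed measurable
  obtain B where "AE \<omega> in M. Z j \<omega> * uncrossed Z c k \<omega> \<le> B" using stopped_bounded[OF assms(1)] .
  then show "integrable M (\<lambda>\<omega>. Z j \<omega> * uncrossed Z c k \<omega>)"
    using stopped_nonneg by (intro integrable_const_bound[of _ B]) auto
qed

lemma integral_stopped_at_level_le_one:
  "k \<le> n \<Longrightarrow> (\<integral>\<omega>. c * (1 - uncrossed Z c k \<omega>) + Z k \<omega> * uncrossed Z c k \<omega> \<partial>M) \<le> 1"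
proof (induction k)
  case 0
  interpret prob_space M by (rule prob)
  show ?case using Z_0 by (simp add: prob_space)
next
  case (Suc k)
  then have k: "k < n" "k \<le> n" by auto
  note int = integrable_stopped[OF Suc.prems Suc.prems] integrable_stopped[OF Suc.prems k(2)]
    integrable_stopped[OF k(2) k(2)]
  have "(\<integral>\<omega>. c * (1 - uncrossed Z c (Suc k) \<omega>) + Z (Suc k) \<omega> * uncrossed Z c (Suc k) \<omega> \<partial>M)
      \<le> (\<integral>\<omega>. c * (1 - uncrossed Z c k \<omega>) + Z (Suc k) \<omega> * uncrossed Z c k \<omega> \<partial>M)"
    using int by (intro integral_mono stopped_at_level_Suc_le) auto
  also have "\<dots> = (\<integral>\<omega>. c * (1 - uncrossed Z c k \<omega>) \<partial>M)
      + (\<integral>\<omega>. (Z k \<omega> * uncrossed Z c k \<omega>) * D (Suc k) \<omega> \<partial>M)"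
    using int by (simp add: Z_Suc ac_simps)
  also have "\<dots> \<le> (\<integral>\<omega>. c * (1 - uncrossed Z c k \<omega>) \<partial>M) + (\<integral>\<omega>. Z k \<omega> * uncrossed Z c k \<omega> \<partial>M)"
  proof -
    obtain B where "AE \<omega> in M. Z k \<omega> * uncrossed Z c k \<omega> \<le> B" using stopped_bounded[OF k(2)] .
    moreover have "(\<lambda>\<omega>. Z k \<omega> * uncrossed Z c k \<omega>) \<in> borel_measurable (F k)"
      using Z_adapted[OF order_refl k(2)] uncrossed_adapted[OF k(2)] by measurable
    ultimately show ?thesis
      using stopped_nonneg by (intro add_left_mono supermartingale[OF k(1)]) auto
  qed
  also have "\<dots> = (\<integral>\<omega>. c * (1 - uncrossed Z c k \<omega>) + Z k \<omega> * uncrossed Z c k \<omega> \<partial>M)"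
    using int by simp
  also have "\<dots> \<le> 1" using Suc.IH k by simp
  finally show ?case .
qed

lemma Ville_maximal_inequality:
  assumes "0 < c"
  shows "measure M {\<omega> \<in> space M. \<exists>j\<in>{1..n}. c \<le> Z j \<omega>} \<le> 1 / c"
proof -
  interpret prob_space M by (rule prob)
  define S where "S = {\<omega> \<in> space M. \<exists>j\<in>{1..n}. c \<le> Z j \<omega>}"
  have [measurable]: "uncrossed Z c n \<in> borel_measurable M"
    using measurable_from_subalg[OF Fsub uncrossed_adapted] by auto
  have S_eq: "S = {\<omega> \<in> space M. uncrossed Z c n \<omega> = 0}"
    unfolding S_def by (auto simp: uncrossed_def not_less)
  have "measure M S = (\<integral>\<omega>. indicator S \<omega> \<partial>M)"
    unfolding S_eq by simp
  also have "\<dots> = (\<integral>\<omega>. 1 - uncrossed Z c n \<omega> \<partial>M)"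
    unfolding S_eq by (intro Bochner_Integration.integral_cong) (auto simp: uncrossed_def indicator_def)
  finally have "c * measure M S = (\<integral>\<omega>. c * (1 - uncrossed Z c n \<omega>) \<partial>M)" by simp
  also have "\<dots> \<le> (\<integral>\<omega>. c * (1 - uncrossed Z c n \<omega>) + Z n \<omega> * uncrossed Z c n \<omega> \<partial>M)"
    using integrable_stopped[of n n] stopped_nonneg by (intro integral_mono) auto
  also have "\<dots> \<le> 1" by (rule integral_stopped_at_level_le_one) simp
  finally show ?thesis unfolding S_def using \<open>0 < c\<close> by (simp add: field_simps mult.commute)
qed

end

lemma measure_gt_le_truncated_moment:
  fixes f :: "'a \<Rightarrow> real"
  assumes "finite_measure M" and [measurable]: "f \<in> borel_measurable M"
    and moment: "integrable M (\<lambda>\<omega>. \<bar>f \<omega>\<bar> powr q)" and "0 < y" "0 \<le> q"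
  shows "measure M {\<omega> \<in> space M. y < f \<omega>}
    \<le> (\<integral>\<omega>. \<bar>f \<omega>\<bar> powr q * indicator {w. y < f w} \<omega> \<partial>M) / y powr q"
proof -
  interpret finite_measure M by fact
  define S where "S = {\<omega> \<in> space M. y < f \<omega>}"
  have [measurable]: "S \<in> sets M" unfolding S_def by measurable
  have "y powr q * measure M S = (\<integral>\<omega>. indicator S \<omega> * y powr q \<partial>M)" by simp
  also have "\<dots> \<le> (\<integral>\<omega>. indicator S \<omega> * \<bar>f \<omega>\<bar> powr q \<partial>M)"
  proof (rule integral_mono)
    show "integrable M (\<lambda>\<omega>. indicator S \<omega> * y powr q)"
      by (rule integrable_bounded_mult[of _ "\<lambda>_. y powr q" _ 1]) auto
    show "integrable M (\<lambda>\<omega>. indicator S \<omega> * \<bar>f \<omega>\<bar> powr q)"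
      by (rule integrable_bounded_mult[OF moment, of _ 1]) auto
    show "indicator S \<omega> * y powr q \<le> indicator S \<omega> * \<bar>f \<omega>\<bar> powr q" for \<omega>
      using \<open>0 < y\<close> \<open>0 \<le> q\<close> by (auto simp: S_def indicator_def intro: powr_mono2)
  qed
  also have "\<dots> = (\<integral>\<omega>. \<bar>f \<omega>\<bar> powr q * indicator {w. y < f w} \<omega> \<partial>M)"
    by (intro Bochner_Integration.integral_cong) (auto simp: S_def indicator_def)
  finally show ?thesis
    using \<open>0 < y\<close> unfolding S_def by (simp add: field_simps mult.commute)
qed

lemma exceedance_subset_truncated_or_jump:
  "{\<omega> \<in> space M. \<exists>k\<in>{1..n}. x \<le> mart_sum \<xi> k \<omega> \<and> P k \<omega>}
    \<subseteq> {\<omega> \<in> space M. \<exists>k\<in>{1..n}. x \<le> (\<Sum>i=1..k. min (\<xi> i \<omega>) y) \<and> P k \<omega>}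
      \<union> (\<Union>i\<in>{1..n}. {\<omega> \<in> space M. y < \<xi> i \<omega>})"
proof safe
  fix \<omega> k assume "\<omega> \<in> space M" "k \<in> {1..n}" "x \<le> mart_sum \<xi> k \<omega>" "P k \<omega>"
    and no_jump: "\<omega> \<notin> (\<Union>i\<in>{1..n}. {\<omega> \<in> space M. y < \<xi> i \<omega>})"
  then have "\<xi> i \<omega> \<le> y" if "i \<in> {1..k}" for i
    using that by fastforce
  then have "(\<Sum>i=1..k. min (\<xi> i \<omega>) y) = mart_sum \<xi> k \<omega>"
    unfolding mart_sum_def by (intro sum.cong) auto
  with \<open>x \<le> mart_sum \<xi> k \<omega>\<close> \<open>P k \<omega>\<close> \<open>k \<in> {1..n}\<close>
  show "\<exists>k\<in>{1..n}. x \<le> (\<Sum>i=1..k. min (\<xi> i \<omega>) y) \<and> P k \<omega>" by (intro bexI[of _ k]) auto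
qed

lemma square_le_one_plus_abs_powr:
  fixes t q :: real
  assumes "2 \<le> q"
  shows "t\<^sup>2 \<le> 1 + \<bar>t\<bar> powr q"
proof (cases "\<bar>t\<bar> \<le> 1")
  case True
  then have "t\<^sup>2 \<le> 1" by (simp add: abs_square_le_1)
  then show ?thesis by (simp add: add_increasing2)
next
  case False
  have "t\<^sup>2 = \<bar>t\<bar> powr 2" by simp
  also have "\<dots> \<le> \<bar>t\<bar> powr q" using False assms by (intro powr_mono) auto
  finally show ?thesis by simp
qed

lemma integrable_square_if_integrable_powr:
  fixes f :: "'a \<Rightarrow> real"
  assumes "finite_measure M" and [measurable]: "f \<in> borel_measurable M"
    and "integrable M (\<lambda>\<omega>. \<bar>f \<omega>\<bar> powr q)" and "2 \<le> q"
  shows "integrable M (\<lambda>\<omega>. (f \<omega>)\<^sup>2)"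
proof (rule Bochner_Integration.integrable_bound[where f="\<lambda>\<omega>. 1 + \<bar>f \<omega>\<bar> powr q"])
  interpret finite_measure M by fact
  show "integrable M (\<lambda>\<omega>. 1 + \<bar>f \<omega>\<bar> powr q)" using assms(3) by auto
  show "AE \<omega> in M. norm ((f \<omega>)\<^sup>2) \<le> norm (1 + \<bar>f \<omega>\<bar> powr q)"
    using square_le_one_plus_abs_powr[OF \<open>2 \<le> q\<close>] by simp
qed measurable

lemma sets_truncated_crossing:
  assumes "\<And>i. 1 \<le> i \<Longrightarrow> i \<le> n \<Longrightarrow> \<xi> i \<in> borel_measurable M"
  shows "{\<omega> \<in> space M. \<exists>k\<in>{1..n}. x \<le> (\<Sum>i=1..k. min (\<xi> i \<omega>) y) \<and> cond_var_sum M F \<xi> k \<omega> \<le> w}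
    \<in> sets M"
proof (rule sets.sets_Collect_finite_Ex)
  fix k assume "k \<in> {1..n}"
  then have [measurable]: "(\<lambda>\<omega>. \<Sum>i=1..k. min (\<xi> i \<omega>) y) \<in> borel_measurable M"
    using assms by (auto intro!: borel_measurable_sum borel_measurable_min)
  have [measurable]: "cond_var_sum M F \<xi> k \<in> borel_measurable M"
    unfolding cond_var_sum_def by measurable
  show "{\<omega> \<in> space M. x \<le> (\<Sum>i=1..k. min (\<xi> i \<omega>) y) \<and> cond_var_sum M F \<xi> k \<omega> \<le> w} \<in> sets M"
    by measurable
qed simp

context
  fixes M :: "'a measure" and F :: "nat \<Rightarrow> 'a measure" and n :: nat and \<xi> :: "nat \<Rightarrow> 'a \<Rightarrow> real"
  assumes prob: "prob_space M"
    and Fsub: "\<And>i. i \<le> n \<Longrightarrow> subalgebra M (F i)"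
    and Fmono: "\<And>i j. i \<le> j \<Longrightarrow> j \<le> n \<Longrightarrow> subalgebra (F j) (F i)"
    and adapted: "\<And>i. 1 \<le> i \<Longrightarrow> i \<le> n \<Longrightarrow> \<xi> i \<in> borel_measurable (F i)"
    and square_integrable: "\<And>i. 1 \<le> i \<Longrightarrow> i \<le> n \<Longrightarrow> integrable M (\<lambda>\<omega>. (\<xi> i \<omega>)\<^sup>2)"
    and mds: "\<And>i. 1 \<le> i \<Longrightarrow> i \<le> n \<Longrightarrow> AE \<omega> in M. real_cond_exp M (F (i - 1)) (\<xi> i) \<omega> = 0"
begin

private lemma increment_borel_measurable: "1 \<le> i \<Longrightarrow> i \<le> n \<Longrightarrow> \<xi> i \<in> borel_measurable M"
  using measurable_from_subalg[OF Fsub adapted] by simp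

lemma truncated_sum_adapted:
  assumes "j \<le> k" "k \<le> n"
  shows "(\<lambda>\<omega>. \<Sum>i=1..j. min (\<xi> i \<omega>) y) \<in> borel_measurable (F k)"
proof (intro borel_measurable_sum borel_measurable_min borel_measurable_const)
  fix i assume "i \<in> {1..j}"
  with assms show "\<xi> i \<in> borel_measurable (F k)"
    using measurable_from_subalg[OF Fmono adapted] by auto
qed

lemma cond_var_sum_adapted:
  assumes "j \<le> k" "k \<le> n"
  shows "cond_var_sum M F \<xi> j \<in> borel_measurable (F k)"
  unfolding cond_var_sum_def
proof (intro borel_measurable_sum)
  fix i assume "i \<in> {1..j}"
  with assms have "i - 1 \<le> k" by auto
  from measurable_from_subalg[OF Fmono[OF this \<open>k \<le> n\<close>] borel_measurable_cond_exp]
  show "real_cond_exp M (F (i - 1)) (\<lambda>w. (\<xi> i w)\<^sup>2) \<in> borel_measurable (F k)" .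
qed

lemma AE_cond_var_sum_nonneg:
  assumes "k \<le> n"
  shows "AE \<omega> in M. 0 \<le> cond_var_sum M F \<xi> k \<omega>"
proof -
  interpret prob_space M by (rule prob)
  have "AE \<omega> in M. 0 \<le> real_cond_exp M (F (i - 1)) (\<lambda>w. (\<xi> i w)\<^sup>2) \<omega>" if "i \<in> {1..k}" for i
  proof -
    have "subalgebra M (F (i - 1))" using that assms by (intro Fsub) auto
    then interpret finite_measure_subalgebra M "F (i - 1)" by unfold_locales
    show ?thesis
      using increment_borel_measurable that assms by (intro real_cond_exp_pos) auto
  qed
  then have "AE \<omega> in M. \<forall>i\<in>{1..k}. 0 \<le> real_cond_exp M (F (i - 1)) (\<lambda>w. (\<xi> i w)\<^sup>2) \<omega>"
    by (intro AE_finite_allI) auto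
  then show ?thesis unfolding cond_var_sum_def by eventually_elim (auto intro: sum_nonneg)
qed

lemma AE_truncated_exp_process_le:
  assumes "k \<le> n" "0 \<le> l" "0 \<le> g"
  shows "AE \<omega> in M. exp (l * (\<Sum>i=1..k. min (\<xi> i \<omega>) y) - g * cond_var_sum M F \<xi> k \<omega>) \<le> exp (l * (real k * y))"
  using AE_cond_var_sum_nonneg[OF \<open>k \<le> n\<close>]
proof eventually_elim
  case (elim \<omega>)
  have "(\<Sum>i=1..k. min (\<xi> i \<omega>) y) \<le> real k * y"
    using sum_mono[of "{1..k}" "\<lambda>i. min (\<xi> i \<omega>) y" "\<lambda>_. y"] by simp
  then have "l * (\<Sum>i=1..k. min (\<xi> i \<omega>) y) \<le> l * (real k * y)"
    using assms by (intro mult_left_mono) auto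
  moreover have "0 \<le> g * cond_var_sum M F \<xi> k \<omega>" using elim assms by simp
  ultimately show ?case by simp
qed

lemma Bernstein_increment_supermartingale:
  assumes "k < n" and "Y \<in> borel_measurable (F k)" "\<And>\<omega>. 0 \<le> Y \<omega>" "AE \<omega> in M. Y \<omega> \<le> C"
    and l: "0 < l" "0 \<le> y" "l * y < 3"
  shows "(\<integral>\<omega>. Y \<omega> * exp (l * min (\<xi> (Suc k) \<omega>) y
            - l\<^sup>2 / (2 * (1 - l * y / 3)) * real_cond_exp M (F k) (\<lambda>w. (\<xi> (Suc k) w)\<^sup>2) \<omega>) \<partial>M)
         \<le> (\<integral>\<omega>. Y \<omega> \<partial>M)"
proof -
  interpret prob_space M by (rule prob)
  have k: "1 \<le> Suc k" "Suc k \<le> n" using \<open>k < n\<close> by auto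
  have G: "subalgebra M (F k)" using Fsub \<open>k < n\<close> by simp
  note sq = square_integrable[OF k]
  have X: "integrable M (\<xi> (Suc k))"
    using square_integrable_imp_integrable[OF increment_borel_measurable[OF k] sq] .
  have "AE \<omega> in M. real_cond_exp M (F k) (\<xi> (Suc k)) \<omega> = 0" using mds[OF k] by simp
  from Bernstein_supermartingale_step[OF prob G X sq this assms(2-4) l] show ?thesis .
qed

lemma truncated_exponential_bound:
  assumes l: "0 < l" "0 \<le> y" "l * y < 3"
  shows "measure M {\<omega> \<in> space M. \<exists>k\<in>{1..n}. x \<le> (\<Sum>i=1..k. min (\<xi> i \<omega>) y) \<and> cond_var_sum M F \<xi> k \<omega> \<le> w}
    \<le> exp (- (l * x - l\<^sup>2 / (2 * (1 - l * y / 3)) * w))"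
proof -
  interpret prob_space M by (rule prob)
  define g where "g = l\<^sup>2 / (2 * (1 - l * y / 3))"
  define Z where "Z k \<omega> = exp (l * (\<Sum>i=1..k. min (\<xi> i \<omega>) y) - g * cond_var_sum M F \<xi> k \<omega>)" for k \<omega>
  define D where
    "D k \<omega> = exp (l * min (\<xi> k \<omega>) y - g * real_cond_exp M (F (k - 1)) (\<lambda>w. (\<xi> k w)\<^sup>2) \<omega>)" for k \<omega>
  define c where "c = exp (l * x - g * w)"
  have g: "0 \<le> g" unfolding g_def using l by auto
  have Z_adapted: "Z j \<in> borel_measurable (F k)" if "j \<le> k" "k \<le> n" for j k
    using truncated_sum_adapted[OF that] cond_var_sum_adapted[OF that] unfolding Z_def by measurable
  have Z_bounded: "\<exists>B. AE \<omega> in M. Z k \<omega> \<le> B" if "k \<le> n" for k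
    using AE_truncated_exp_process_le[OF that less_imp_le[OF \<open>0 < l\<close>] g] unfolding Z_def by blast
  have Z_Suc: "Z (Suc k) \<omega> = Z k \<omega> * D (Suc k) \<omega>" for k \<omega>
    unfolding Z_def D_def cond_var_sum_def by (simp add: exp_add[symmetric] algebra_simps)
  have supermartingale: "(\<integral>\<omega>. Y \<omega> * D (Suc k) \<omega> \<partial>M) \<le> (\<integral>\<omega>. Y \<omega> \<partial>M)"
    if "k < n" "Y \<in> borel_measurable (F k)" "\<And>\<omega>. 0 \<le> Y \<omega>" "AE \<omega> in M. Y \<omega> \<le> C" for k Y C
    using Bernstein_increment_supermartingale[OF that l] unfolding D_def g_def by simp
  have "measure M {\<omega> \<in> space M. \<exists>j\<in>{1..n}. c \<le> Z j \<omega>} \<le> 1 / c"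
    by (rule Ville_maximal_inequality[where F=F and Z=Z and D=D and c=c, OF prob Fsub Z_adapted _ _ Z_bounded Z_Suc
          supermartingale]) (simp_all add: Z_def c_def cond_var_sum_def)
  also have "1 / c = exp (- (l * x - g * w))" unfolding c_def by (simp only: exp_minus inverse_eq_divide)
  finally have level: "measure M {\<omega> \<in> space M. \<exists>j\<in>{1..n}. c \<le> Z j \<omega>} \<le> exp (- (l * x - g * w))" .
  have "measure M {\<omega> \<in> space M. \<exists>k\<in>{1..n}. x \<le> (\<Sum>i=1..k. min (\<xi> i \<omega>) y) \<and> cond_var_sum M F \<xi> k \<omega> \<le> w}
      \<le> measure M {\<omega> \<in> space M. \<exists>j\<in>{1..n}. c \<le> Z j \<omega>}"
  proof (rule finite_measure_mono)
    show "{\<omega> \<in> space M. \<exists>j\<in>{1..n}. c \<le> Z j \<omega>} \<in> sets M"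
      using measurable_from_subalg[OF Fsub Z_adapted] by (intro sets.sets_Collect_finite_Ex) auto
    have "c \<le> Z k \<omega>" if "x \<le> (\<Sum>i=1..k. min (\<xi> i \<omega>) y)" "cond_var_sum M F \<xi> k \<omega> \<le> w" for k \<omega>
    proof -
      have "l * x - g * w \<le> l * (\<Sum>i=1..k. min (\<xi> i \<omega>) y) - g * cond_var_sum M F \<xi> k \<omega>"
        using that l g by (intro diff_mono mult_left_mono) auto
      then show ?thesis unfolding c_def Z_def by simp
    qed
    then show "{\<omega> \<in> space M. \<exists>k\<in>{1..n}. x \<le> (\<Sum>i=1..k. min (\<xi> i \<omega>) y) \<and> cond_var_sum M F \<xi> k \<omega> \<le> w}
      \<subseteq> {\<omega> \<in> space M. \<exists>j\<in>{1..n}. c \<le> Z j \<omega>}"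
      by blast
  qed
  then show ?thesis using level unfolding g_def by simp
qed

lemma exceedance_le_exp_plus_jumps:
  assumes l: "0 < l" "0 \<le> y" "l * y < 3"
  shows "measure M {\<omega> \<in> space M. \<exists>k\<in>{1..n}. x \<le> mart_sum \<xi> k \<omega> \<and> cond_var_sum M F \<xi> k \<omega> \<le> w}
    \<le> exp (- (l * x - l\<^sup>2 / (2 * (1 - l * y / 3)) * w)) + (\<Sum>i=1..n. measure M {\<omega> \<in> space M. y < \<xi> i \<omega>})"
proof -
  interpret prob_space M by (rule prob)
  define T where
    "T = {\<omega> \<in> space M. \<exists>k\<in>{1..n}. x \<le> (\<Sum>i=1..k. min (\<xi> i \<omega>) y) \<and> cond_var_sum M F \<xi> k \<omega> \<le> w}"
  define J where "J i = {\<omega> \<in> space M. y < \<xi> i \<omega>}" for i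
  have T: "T \<in> sets M" unfolding T_def using increment_borel_measurable by (rule sets_truncated_crossing)
  have J: "J i \<in> sets M" if "i \<in> {1..n}" for i
  proof -
    have [measurable]: "\<xi> i \<in> borel_measurable M" using increment_borel_measurable that by auto
    show ?thesis unfolding J_def by measurable
  qed
  have "measure M {\<omega> \<in> space M. \<exists>k\<in>{1..n}. x \<le> mart_sum \<xi> k \<omega> \<and> cond_var_sum M F \<xi> k \<omega> \<le> w}
      \<le> measure M (T \<union> (\<Union>i\<in>{1..n}. J i))"
  proof (rule finite_measure_mono)
    show "T \<union> (\<Union>i\<in>{1..n}. J i) \<in> sets M" using T J by auto
  qed (unfold T_def J_def, rule exceedance_subset_truncated_or_jump)
  also have "\<dots> \<le> measure M T + measure M (\<Union>i\<in>{1..n}. J i)"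
    using T J by (intro measure_subadditive) auto
  also have "measure M (\<Union>i\<in>{1..n}. J i) \<le> (\<Sum>i=1..n. measure M (J i))"
    using J by (intro finite_measure_subadditive_finite) auto
  also have "measure M T \<le> exp (- (l * x - l\<^sup>2 / (2 * (1 - l * y / 3)) * w))"
    unfolding T_def using l by (rule truncated_exponential_bound)
  finally show ?thesis unfolding J_def by simp
qed

end

lemma Freedman_exponent:
  fixes x y v :: real
  assumes x: "0 < x" and y: "0 \<le> y" and v: "0 < v"
  defines "V \<equiv> v\<^sup>2 + x * y / 3"
  shows "x / V * y < 3" and "x / V * x - (x / V)\<^sup>2 / (2 * (1 - x / V * y / 3)) * v\<^sup>2 = x\<^sup>2 / (2 * V)"
proof -
  have V: "0 < V" unfolding V_def using x y v by (simp add: add_pos_nonneg)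
  show "x / V * y < 3" using V x y v unfolding V_def by (simp add: field_simps)
  have "1 - x / V * y / 3 = v\<^sup>2 / V" using V unfolding V_def by (simp add: field_simps)
  moreover have "(x / V)\<^sup>2 / (2 * (v\<^sup>2 / V)) * v\<^sup>2 = x\<^sup>2 / (2 * V)"
    using V v by (simp add: field_simps power2_eq_square)
  moreover have "x / V * x - x\<^sup>2 / (2 * V) = x\<^sup>2 / (2 * V)"
    using V by (simp add: field_simps power2_eq_square)
  ultimately show "x / V * x - (x / V)\<^sup>2 / (2 * (1 - x / V * y / 3)) * v\<^sup>2 = x\<^sup>2 / (2 * V)"
    by simp
qed

theorem theorem2p3:
  fixes M :: "'a measure" and F :: "nat \<Rightarrow> 'a measure"
    and \<xi> :: "nat \<Rightarrow> 'a \<Rightarrow> real" and n :: nat and p \<delta> x v :: real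
  assumes "prob_space M"
    and "n \<ge> 1"
    and F0: "sets (F 0) = {{}, space M}" and "space (F 0) = space M"
    and Fsub: "\<And>i. i \<le> n \<Longrightarrow> subalgebra M (F i)"
    and Fmono: "\<And>i j. i \<le> j \<Longrightarrow> j \<le> n \<Longrightarrow> subalgebra (F j) (F i)"
    and xi0: "\<And>\<omega>. \<xi> 0 \<omega> = 0"
    and adapted: "\<And>i. i \<le> n \<Longrightarrow> \<xi> i \<in> borel_measurable (F i)"
    and integ: "\<And>i. i \<le> n \<Longrightarrow> integrable M (\<xi> i)"
    and mds: "\<And>i. 1 \<le> i \<Longrightarrow> i \<le> n \<Longrightarrow> AE \<omega> in M. real_cond_exp M (F (i - 1)) (\<xi> i) \<omega> = 0"
    and "p \<ge> 2" and "\<delta> > 0"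
    and moment: "\<And>i. 1 \<le> i \<Longrightarrow> i \<le> n \<Longrightarrow> integrable M (\<lambda>\<omega>. \<bar>\<xi> i \<omega>\<bar> powr (p + \<delta>))"
    and "x > 0" and "v > 0"
  shows "measure M {\<omega> \<in> space M. \<exists>k\<in>{1..n}. mart_sum \<xi> k \<omega> \<ge> x \<and> cond_var_sum M F \<xi> k \<omega> \<le> v\<^sup>2}
    \<le> exp (- (x\<^sup>2 / (2 * (v\<^sup>2 + (1/3) * x powr ((2*p + \<delta>) / (p + \<delta>))))))
       + (1 / x powr p) * (\<Sum>i=1..n. integral\<^sup>L M (\<lambda>\<omega>. \<bar>\<xi> i \<omega>\<bar> powr (p + \<delta>) * indicator {w. \<xi> i w > x powr (p / (p + \<delta>))} \<omega>))"
proof -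
  interpret prob_space M by fact
  define y where "y = x powr (p / (p + \<delta>))"
  define V where "V = v\<^sup>2 + x * y / 3"
  have y: "0 < y" unfolding y_def using \<open>x > 0\<close> by simp
  have \<xi>_measurable: "\<xi> i \<in> borel_measurable M" if "i \<le> n" for i
    using measurable_from_subalg[OF Fsub adapted] that by auto
  have square_integrable: "integrable M (\<lambda>\<omega>. (\<xi> i \<omega>)\<^sup>2)" if "1 \<le> i" "i \<le> n" for i
    using integrable_square_if_integrable_powr[OF _ \<xi>_measurable moment] that \<open>p \<ge> 2\<close> \<open>\<delta> > 0\<close>
    by (simp add: prob_space_axioms)
  obtain l: "x / V * y < 3"
    and exponent: "x / V * x - (x / V)\<^sup>2 / (2 * (1 - x / V * y / 3)) * v\<^sup>2 = x\<^sup>2 / (2 * V)"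
    using Freedman_exponent[OF \<open>x > 0\<close> less_imp_le[OF y] \<open>v > 0\<close>] unfolding V_def by blast
  have "measure M {\<omega> \<in> space M. \<exists>k\<in>{1..n}. x \<le> mart_sum \<xi> k \<omega> \<and> cond_var_sum M F \<xi> k \<omega> \<le> v\<^sup>2}
      \<le> exp (- (x\<^sup>2 / (2 * V))) + (\<Sum>i=1..n. measure M {\<omega> \<in> space M. y < \<xi> i \<omega>})"
    unfolding exponent[symmetric]
    by (rule exceedance_le_exp_plus_jumps[where F=F and \<xi>=\<xi> and n=n, OF \<open>prob_space M\<close> Fsub Fmono adapted
          square_integrable mds _ _ l]) (use \<open>x > 0\<close> y \<open>v > 0\<close> in \<open>auto simp: V_def add_pos_nonneg\<close>)
  also have "(\<Sum>i=1..n. measure M {\<omega> \<in> space M. y < \<xi> i \<omega>})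
      \<le> (\<Sum>i=1..n. (\<integral>\<omega>. \<bar>\<xi> i \<omega>\<bar> powr (p + \<delta>) * indicator {w. y < \<xi> i w} \<omega> \<partial>M) / x powr p)"
  proof (rule sum_mono)
    have "y powr (p + \<delta>) = x powr p" unfolding y_def using \<open>p \<ge> 2\<close> \<open>\<delta> > 0\<close> by (simp add: powr_powr)
    then show "measure M {\<omega> \<in> space M. y < \<xi> i \<omega>}
        \<le> (\<integral>\<omega>. \<bar>\<xi> i \<omega>\<bar> powr (p + \<delta>) * indicator {w. y < \<xi> i w} \<omega> \<partial>M) / x powr p" if "i \<in> {1..n}" for i
      using measure_gt_le_truncated_moment[OF _ \<xi>_measurable moment y] that \<open>p \<ge> 2\<close> \<open>\<delta> > 0\<close> by simp
  qed
  also have "V = v\<^sup>2 + (1/3) * x powr ((2 * p + \<delta>) / (p + \<delta>))"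
  proof -
    have "(2 * p + \<delta>) / (p + \<delta>) = 1 + p / (p + \<delta>)" using \<open>p \<ge> 2\<close> \<open>\<delta> > 0\<close> by (simp add: field_simps)
    then show ?thesis unfolding V_def y_def using \<open>x > 0\<close> by (simp add: powr_add)
  qed
  finally show ?thesis unfolding y_def by (simp add: sum_divide_distrib)
qed

end
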